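(* The sequence $(C_n^{(3)})_{n\ge0}$ of three-Catalan numbers, $C_n^{(3)}=\binom{2n}{3n}_3-\binom{2n}{3n+1}_3$, is log-convex, i.e. $C_i^{(3)}C_{i+2}^{(3)}\ge \big(C_{i+1}^{(3)}\big)^2$ for all $i\ge0$.
   Context: The quadrinomial coefficients $\binom{n}{k}_3$ are defined by $(1+x+x^2+x^3)^n=\sum_{k\in\mathbb Z}\binom{n}{k}_3x^k$, with $\binom{n}{k}_3=0$ for $k<0$ or $k>3n$. *)

theory Defs
  imports "HOL-Computational_Algebra.Polynomial"
begin

definition quadrinomial :: "nat \<Rightarrow> int \<Rightarrow> int" where
  "quadrinomial n k = (if k < 0 then 0 else coeff ([:1, 1, 1, 1:] ^ n) (nat k))"

definition three_catalan :: "nat \<Rightarrow> int" where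
  "three_catalan n = quadrinomial (2 * n) (3 * int n) - quadrinomial (2 * n) (3 * int n + 1)"

end

theory Submission
  imports Defs "HOL-Analysis.Convex"
begin

text \<open>Write \<open>G\<^sub>n = (1 + x + x\<^sup>2 + x\<^sup>3)\<^sup>n\<close> and \<open>D\<^sub>n = (1 - x) G\<^sub>n\<close>. Since \<open>G\<^sub>n\<close> is palindromic,
  reflecting \<open>D\<^sub>m\<close> gives \<open>-D\<^sub>m\<close>, so the correlation \<open>\<Sum>\<^sub>j [x\<^sup>j]D\<^sub>m \<cdot> [x\<^sup>j\<^sup>+\<^sup>s]D\<^sub>n\<close> is a
  coefficient of \<open>-D\<^sub>m D\<^sub>n = -(1 - x)\<^sup>2 G\<^sub>m\<^sub>+\<^sub>n\<close>. When \<open>m + n = 2c\<close> and \<open>s = 3(n - c)\<close> it is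
  the coefficient next to the centre, which by palindromy equals \<open>2 C\<^sub>c\<close>.
  Hence \<open>2 C\<^sub>i\<close> and \<open>2 C\<^sub>i\<^sub>+\<^sub>2\<close> are squared norms of the coefficient vectors of \<open>D\<^sub>i\<close> and
  \<open>D\<^sub>i\<^sub>+\<^sub>2\<close>, while \<open>2 C\<^sub>i\<^sub>+\<^sub>1\<close> is the inner product of the first with a shift of the
  second; Cauchy--Schwarz yields log-convexity.\<close>

lemma coeff_mult_reflect_poly:
  fixes p q :: "'a::comm_semiring_1 poly"
  shows "coeff (reflect_poly p * q) (degree p + s) = (\<Sum>j\<le>degree p. coeff p j * coeff q (j + s))"
proof -
  let ?d = "degree p"
  have "coeff (reflect_poly p * q) (?d + s) =
      (\<Sum>i\<le>?d + s. coeff (reflect_poly p) i * coeff q (?d + s - i))"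
    by (rule coeff_mult)
  also have "\<dots> = (\<Sum>i\<le>?d. coeff p (?d - i) * coeff q (?d + s - i))"
    by (rule sum.mono_neutral_cong_right) (auto simp: coeff_reflect_poly)
  also have "\<dots> = (\<Sum>j\<le>?d. coeff p j * coeff q (j + s))"
    using sum.atLeastAtMost_rev[of "\<lambda>j. coeff p j * coeff q (j + s)" 0 ?d]
    by (simp add: atLeast0AtMost)
  finally show ?thesis .
qed

abbreviation quad_poly :: "nat \<Rightarrow> int poly" where
  "quad_poly n \<equiv> [:1, 1, 1, 1:] ^ n"

lemma degree_quad_poly: "degree (quad_poly n) = 3 * n"
  by (subst degree_power_eq) auto

lemma reflect_quad_poly: "reflect_poly (quad_poly n) = quad_poly n"
proof -
  have "reflect_poly [:1, 1, 1, 1::int:] = [:1, 1, 1, 1:]"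
    by (simp add: reflect_poly_def)
  then show ?thesis
    by (simp add: reflect_poly_power)
qed

lemma coeff_quad_poly_sym:
  assumes "k \<le> 3 * n"
  shows "coeff (quad_poly n) (3 * n - k) = coeff (quad_poly n) k"
  using coeff_reflect_poly[of "quad_poly n" k] assms
  by (simp add: reflect_quad_poly degree_quad_poly)

lemma three_catalan_eq_coeff:
  "three_catalan c = coeff (quad_poly (2 * c)) (3 * c) - coeff (quad_poly (2 * c)) (3 * c + 1)"
  by (simp add: three_catalan_def quadrinomial_def nat_add_distrib nat_mult_distrib)

lemma coeff_one_minus_x_squared_mult:
  fixes p :: "'a::comm_ring_1 poly"
  shows "coeff ([:1, -1:]\<^sup>2 * p) (Suc k) = coeff p (Suc k) - 2 * coeff p k + coeff (pCons 0 p) k"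
  by (simp add: power2_eq_square)

lemma coeff_one_minus_x_squared_quad_poly:
  "coeff ([:1, -1:]\<^sup>2 * quad_poly (2 * c)) (3 * c + 1) = - 2 * three_catalan c"
proof -
  let ?P = "quad_poly (2 * c)"
  have "coeff (pCons 0 ?P) (3 * c) = coeff ?P (3 * c + 1)"
  proof (cases "c = 0")
    case True
    then show ?thesis by (simp add: coeff_eq_0 degree_quad_poly)
  next
    case False
    then have center: "3 * c = Suc (3 * c - 1)" and mirror: "3 * (2 * c) - (3 * c + 1) = 3 * c - 1"
      by simp_all
    have "coeff (pCons 0 ?P) (Suc (3 * c - 1)) = coeff ?P (3 * c - 1)"
      by (rule coeff_pCons_Suc)
    also have "\<dots> = coeff ?P (3 * c + 1)"
      using coeff_quad_poly_sym[of "3 * c + 1" "2 * c"] False mirror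
      by simp
    finally show ?thesis
      by (subst center)
  qed
  then show ?thesis
    using coeff_one_minus_x_squared_mult[of ?P "3 * c"]
    by (simp add: three_catalan_eq_coeff)
qed

definition quad_diff_poly :: "nat \<Rightarrow> int poly" where
  "quad_diff_poly n = [:1, -1:] * quad_poly n"

lemma degree_quad_diff_poly: "degree (quad_diff_poly n) = 3 * n + 1"
  unfolding quad_diff_poly_def by (subst degree_mult_eq) (auto simp: degree_quad_poly)

lemma reflect_quad_diff_poly: "reflect_poly (quad_diff_poly n) = - quad_diff_poly n"
proof -
  have "reflect_poly [:1, -1::int:] = - [:1, -1:]"
    by (simp add: reflect_poly_def)
  then show ?thesis
    unfolding quad_diff_poly_def reflect_poly_mult reflect_quad_poly by simp
qed

lemma quad_diff_poly_mult:
  "quad_diff_poly m * quad_diff_poly n = [:1, -1:]\<^sup>2 * quad_poly (m + n)"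
  unfolding quad_diff_poly_def power_add power2_eq_square by (simp only: mult_ac)

lemma quad_diff_poly_correlation:
  assumes "m + n = 2 * c" and "3 * n = 3 * c + s"
  shows "(\<Sum>j\<le>3 * m + 1. coeff (quad_diff_poly m) j * coeff (quad_diff_poly n) (j + s))
    = 2 * three_catalan c"
proof -
  have "(\<Sum>j\<le>3 * m + 1. coeff (quad_diff_poly m) j * coeff (quad_diff_poly n) (j + s))
      = coeff (reflect_poly (quad_diff_poly m) * quad_diff_poly n) (3 * m + 1 + s)"
    using coeff_mult_reflect_poly[of "quad_diff_poly m" "quad_diff_poly n" s, symmetric]
    unfolding degree_quad_diff_poly .
  also have "\<dots> = - coeff ([:1, -1:]\<^sup>2 * quad_poly (2 * c)) (3 * c + 1)"
  proof -
    have "3 * m + 1 + s = 3 * c + 1"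
      using assms by linarith
    then show ?thesis
      by (simp only: reflect_quad_diff_poly minus_mult_left[symmetric] coeff_minus quad_diff_poly_mult assms(1))
  qed
  also have "\<dots> = 2 * three_catalan c"
    unfolding coeff_one_minus_x_squared_quad_poly by simp
  finally show ?thesis .
qed

lemma Cauchy_Schwarz_ineq_sum_int:
  fixes a b :: "'a \<Rightarrow> int"
  shows "(\<Sum>i\<in>I. a i * b i)\<^sup>2 \<le> (\<Sum>i\<in>I. (a i)\<^sup>2) * (\<Sum>i\<in>I. (b i)\<^sup>2)"
proof -
  have "(\<Sum>i\<in>I. real_of_int (a i) * real_of_int (b i))\<^sup>2 \<le>
      (\<Sum>i\<in>I. (real_of_int (a i))\<^sup>2) * (\<Sum>i\<in>I. (real_of_int (b i))\<^sup>2)"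
    by (rule Cauchy_Schwarz_ineq_sum)
  then have "real_of_int ((\<Sum>i\<in>I. a i * b i)\<^sup>2)
      \<le> real_of_int ((\<Sum>i\<in>I. (a i)\<^sup>2) * (\<Sum>i\<in>I. (b i)\<^sup>2))"
    by (simp add: of_int_sum)
  then show ?thesis
    by (simp only: of_int_le_iff)
qed

theorem theorem3p1:
  fixes i :: nat
  shows "three_catalan i * three_catalan (i + 2) \<ge> (three_catalan (i + 1))^2"
proof -
  define a where "a j = coeff (quad_diff_poly i) j" for j
  define b where "b j = coeff (quad_diff_poly (i + 2)) (j + 3)" for j
  let ?I = "{..3 * i + 1}"
  have norm_a: "(\<Sum>j\<in>?I. (a j)\<^sup>2) = 2 * three_catalan i"
    using quad_diff_poly_correlation[of i i i 0] by (simp add: a_def power2_eq_square)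
  have inner_ab: "(\<Sum>j\<in>?I. a j * b j) = 2 * three_catalan (i + 1)"
    using quad_diff_poly_correlation[of i "i + 2" "i + 1" 3] by (simp add: a_def b_def)
  have "(\<Sum>j\<in>?I. (b j)\<^sup>2) = (\<Sum>j\<in>{0 + 3..3 * i + 1 + 3}. (coeff (quad_diff_poly (i + 2)) j)\<^sup>2)"
    unfolding sum.atLeastAtMost_shift_bounds b_def by (simp add: atLeast0AtMost add.commute)
  also have "\<dots> \<le> (\<Sum>j\<le>3 * (i + 2) + 1. (coeff (quad_diff_poly (i + 2)) j)\<^sup>2)"
    by (rule sum_mono2) auto
  also have "\<dots> = 2 * three_catalan (i + 2)"
    using quad_diff_poly_correlation[of "i + 2" "i + 2" "i + 2" 0] by (simp add: power2_eq_square)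
  finally have norm_b: "(\<Sum>j\<in>?I. (b j)\<^sup>2) \<le> 2 * three_catalan (i + 2)" .
  have "0 \<le> three_catalan i"
    using norm_a sum_nonneg[of ?I "\<lambda>j. (a j)\<^sup>2"] by simp
  have "(2 * three_catalan (i + 1))\<^sup>2 \<le> 2 * three_catalan i * (\<Sum>j\<in>?I. (b j)\<^sup>2)"
    using Cauchy_Schwarz_ineq_sum_int[of a b ?I] norm_a inner_ab by simp
  also have "\<dots> \<le> 2 * three_catalan i * (2 * three_catalan (i + 2))"
    using norm_b \<open>0 \<le> three_catalan i\<close> by (intro mult_left_mono) auto
  finally show ?thesis
    by (simp add: power2_eq_square mult.commute)
qed

end
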